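(* Let $\Gamma=(V,\nu,\mu)$ be a fuzzy graph on $n\ge2$ vertices. Then $$\sigma^*(\Gamma)\le\frac{2\,\mathrm{ew}(\Gamma)^2}{n}\left(1-\frac2n\right),$$ with equality if and only if $\Gamma$ has exactly one positive fuzzy edge, with membership value $\mathrm{ew}(\Gamma)$, and all other memberships zero; that is, there are distinct vertices $u,v$ with $\mu(u,v)=\mathrm{ew}(\Gamma)$ and $\mu(x,y)=0$ for all other pairs $\{x,y\}\ne\{u,v\}$, so that the degree sequence is $\mathrm{ew}(\Gamma),\mathrm{ew}(\Gamma),0,\dots,0$ (with $n-2$ zeros).
   Context: A fuzzy graph $\Gamma=(V,\nu,\mu)$ consists of a finite vertex set $V$ with $|V|=n$, a map $\nu:V\to[0,1]$, and a symmetric map $\mu:V\times V\to[0,1]$ with $\mu(u,v)\le\min(\nu(u),\nu(v))$. The fuzzy degree is $d_\Gamma(v)=\sum_{u\ne v}\mu(v,u)$, the fuzzy size is $\mathrm{ew}(\Gamma)=\sum_{\{u,v\},u\ne v}\mu(u,v)$, $\lambda=2\,\mathrm{ew}(\Gamma)/n$, and the fuzzy sigma index is $\sigma^*(\Gamma)=\frac1n\sum_{v}(d_\Gamma(v)-\lambda)^2$. *)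

theory Defs
  imports Main Complex_Main
begin

definition fuzzy_graph :: "'a set \<Rightarrow> ('a \<Rightarrow> real) \<Rightarrow> ('a \<Rightarrow> 'a \<Rightarrow> real) \<Rightarrow> bool" where
  "fuzzy_graph V \<nu> \<mu> \<longleftrightarrow> finite V \<and>
     (\<forall>v\<in>V. 0 \<le> \<nu> v \<and> \<nu> v \<le> 1) \<and>
     (\<forall>u\<in>V. \<forall>v\<in>V. 0 \<le> \<mu> u v \<and> \<mu> u v \<le> 1 \<and> \<mu> u v = \<mu> v u \<and>
                     \<mu> u v \<le> min (\<nu> u) (\<nu> v))"

definition fdeg :: "'a set \<Rightarrow> ('a \<Rightarrow> 'a \<Rightarrow> real) \<Rightarrow> 'a \<Rightarrow> real" where
  "fdeg V \<mu> v = (\<Sum>u\<in>V - {v}. \<mu> v u)"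

definition upairs :: "'a set \<Rightarrow> 'a set set" where
  "upairs V = {{u, v} | u v. u \<in> V \<and> v \<in> V \<and> u \<noteq> v}"

text \<open>Fuzzy size: sum of mu over unordered pairs {u,v}, u \<noteq> v
(the value of mu on a pair is well-defined by symmetry).\<close>
definition fsize :: "'a set \<Rightarrow> ('a \<Rightarrow> 'a \<Rightarrow> real) \<Rightarrow> real" where
  "fsize V \<mu> = (\<Sum>e\<in>upairs V. (THE w. \<exists>u v. e = {u, v} \<and> u \<noteq> v \<and> w = \<mu> u v))"

definition flambda :: "'a set \<Rightarrow> ('a \<Rightarrow> 'a \<Rightarrow> real) \<Rightarrow> real" where
  "flambda V \<mu> = 2 * fsize V \<mu> / real (card V)"

definition fsigma :: "'a set \<Rightarrow> ('a \<Rightarrow> 'a \<Rightarrow> real) \<Rightarrow> real" where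
  "fsigma V \<mu> = (\<Sum>v\<in>V. (fdeg V \<mu> v - flambda V \<mu>)^2) / real (card V)"

end

theory Submission
  imports Defs
begin

text \<open>Write \<open>d\<close> for the degree function and \<open>m\<close> for the fuzzy size, so that \<open>\<Sum>d = 2m\<close>.
Expanding \<open>(\<Sum>d)\<^sup>2\<close> over the edges gives
\<open>4m\<^sup>2 = 2\<Sum>d\<^sup>2 + \<Sum>\<^sub>v \<Sum>\<^sub>u\<^sub>\<noteq>\<^sub>v \<mu> v u (2m - d v - d u)\<close>, and each summand of the second sum is
nonnegative because two degrees together count every edge at most once. Hence
\<open>\<Sum>d\<^sup>2 \<le> 2m\<^sup>2\<close>, and \<open>n \<sigma>\<^sup>* = \<Sum>d\<^sup>2 - 4m\<^sup>2/n\<close> yields the bound. Equality holds iff every edge of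
positive weight has degree sum \<open>2m\<close> at its ends, which forces all other vertices to be
isolated, i.e. a single edge.\<close>

lemma sum_square_deviation_mean:
  fixes f :: "'a \<Rightarrow> real"
  shows "(\<Sum>x\<in>A. (f x - (\<Sum>y\<in>A. f y) / card A)\<^sup>2) =
         (\<Sum>x\<in>A. (f x)\<^sup>2) - (\<Sum>x\<in>A. f x)\<^sup>2 / card A"
proof (cases "card A = 0")
  case True
  then show ?thesis by (cases "finite A") simp_all
next
  case False
  define c where "c = (\<Sum>y\<in>A. f y) / card A"
  have "(\<Sum>x\<in>A. (f x - c)\<^sup>2) = (\<Sum>x\<in>A. (f x)\<^sup>2 - 2 * c * f x + c\<^sup>2)"
    by (simp add: power2_diff algebra_simps)
  also have "\<dots> = (\<Sum>x\<in>A. (f x)\<^sup>2) - 2 * c * (\<Sum>x\<in>A. f x) + card A * c\<^sup>2"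
    by (simp add: sum.distrib sum_subtractf sum_distrib_left)
  also have "\<dots> = (\<Sum>x\<in>A. (f x)\<^sup>2) - (\<Sum>x\<in>A. f x)\<^sup>2 / card A"
    using False by (simp add: c_def field_simps power2_eq_square)
  finally show ?thesis unfolding c_def .
qed

locale symmetric_weights =
  fixes V :: "'a set" and \<mu> :: "'a \<Rightarrow> 'a \<Rightarrow> real"
  assumes finite_V: "finite V"
    and nonneg: "u \<in> V \<Longrightarrow> v \<in> V \<Longrightarrow> 0 \<le> \<mu> u v"
    and sym: "u \<in> V \<Longrightarrow> v \<in> V \<Longrightarrow> \<mu> u v = \<mu> v u"

lemma fuzzy_graph_imp_symmetric_weights:
  "fuzzy_graph V \<nu> \<mu> \<Longrightarrow> symmetric_weights V \<mu>"
  unfolding fuzzy_graph_def symmetric_weights_def by auto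

context symmetric_weights
begin

lemma fdeg_nonneg: "v \<in> V \<Longrightarrow> 0 \<le> fdeg V \<mu> v"
  unfolding fdeg_def using nonneg by (intro sum_nonneg) auto

lemma fdeg_eq_0_iff: "v \<in> V \<Longrightarrow> fdeg V \<mu> v = 0 \<longleftrightarrow> (\<forall>u\<in>V - {v}. \<mu> v u = 0)"
  unfolding fdeg_def using finite_V nonneg by (intro sum_nonneg_eq_0_iff) auto

lemma fdeg_eq_single_neighbour:
  assumes "a \<in> V" "b \<in> V" "a \<noteq> b" and "\<forall>u\<in>V - {a, b}. \<mu> a u = 0"
  shows "fdeg V \<mu> a = \<mu> a b"
proof -
  have "fdeg V \<mu> a = \<mu> a b + (\<Sum>u\<in>V - {a} - {b}. \<mu> a u)"
    unfolding fdeg_def using assms finite_V by (subst sum.remove[of _ b]) auto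
  also have "(\<Sum>u\<in>V - {a} - {b}. \<mu> a u) = 0"
    using assms(4) by (intro sum.neutral) auto
  finally show ?thesis by simp
qed

lemma upair_weight:
  assumes "a \<in> V" "b \<in> V" "a \<noteq> b"
  shows "(THE w. \<exists>u v. {a, b} = {u, v} \<and> u \<noteq> v \<and> w = \<mu> u v) = \<mu> a b"
proof (rule the_equality)
  fix w assume "\<exists>u v. {a, b} = {u, v} \<and> u \<noteq> v \<and> w = \<mu> u v"
  then show "w = \<mu> a b" using assms sym[of a b] by (auto simp: doubleton_eq_iff)
qed (use assms in auto)

lemma sum_fdeg_eq_2_fsize: "(\<Sum>v\<in>V. fdeg V \<mu> v) = 2 * fsize V \<mu>"
proof -
  define P where "P = Sigma V (\<lambda>v. V - {v})"
  define ends where "ends = (\<lambda>p :: 'a \<times> 'a. {fst p, snd p})"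
  have "finite (upairs V)"
    using finite_V by (rule finite_subset[rotated, OF finite_Pow_iff[THEN iffD2]])
      (auto simp: upairs_def)
  moreover have "ends ` P \<subseteq> upairs V"
    unfolding ends_def P_def upairs_def by fastforce
  moreover have "finite P" unfolding P_def using finite_V by auto
  ultimately have grouped: "(\<Sum>p\<in>P. \<mu> (fst p) (snd p)) =
      (\<Sum>e\<in>upairs V. \<Sum>p\<in>{p\<in>P. ends p = e}. \<mu> (fst p) (snd p))"
    by (simp add: sum.group)
  have fibre: "(\<Sum>p\<in>{p\<in>P. ends p = e}. \<mu> (fst p) (snd p)) =
      2 * (THE w. \<exists>u v. e = {u, v} \<and> u \<noteq> v \<and> w = \<mu> u v)" if e: "e \<in> upairs V" for e
  proof -
    obtain a b where ab: "e = {a, b}" "a \<in> V" "b \<in> V" "a \<noteq> b"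
      using e unfolding upairs_def by auto
    have "{p\<in>P. ends p = e} = {(a, b), (b, a)}"
      unfolding P_def ends_def ab(1) using ab by (auto simp: doubleton_eq_iff)
    then show ?thesis using ab sym[of a b] upair_weight[of a b] by simp
  qed
  have "(\<Sum>v\<in>V. fdeg V \<mu> v) = (\<Sum>p\<in>P. \<mu> (fst p) (snd p))"
    unfolding fdeg_def P_def using finite_V by (subst sum.Sigma) (auto simp: case_prod_beta)
  also have "\<dots> = 2 * fsize V \<mu>"
    unfolding grouped fsize_def sum_distrib_left using fibre by simp
  finally show ?thesis .
qed

lemma fdeg_add_fdeg_le:
  assumes "u \<in> V" "v \<in> V" "u \<noteq> v"
  shows "fdeg V \<mu> u + fdeg V \<mu> v \<le> 2 * fsize V \<mu>"
proof -
  have "(\<Sum>x\<in>{u, v}. fdeg V \<mu> x) \<le> (\<Sum>x\<in>V. fdeg V \<mu> x)"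
    using assms finite_V fdeg_nonneg by (intro sum_mono2) auto
  then show ?thesis using assms by (simp add: sum_fdeg_eq_2_fsize)
qed

lemma sum_weighted_fdeg_neighbours:
  "(\<Sum>v\<in>V. \<Sum>u\<in>V - {v}. \<mu> v u * fdeg V \<mu> u) = (\<Sum>u\<in>V. (fdeg V \<mu> u)\<^sup>2)"
proof -
  have "(\<Sum>v\<in>V. \<Sum>u\<in>V - {v}. \<mu> v u * fdeg V \<mu> u) =
        (\<Sum>v\<in>V. \<Sum>u\<in>{u\<in>V. v \<noteq> u}. \<mu> v u * fdeg V \<mu> u)"
    by (intro sum.cong) auto
  also have "\<dots> = (\<Sum>u\<in>V. \<Sum>v\<in>{v\<in>V. v \<noteq> u}. \<mu> v u * fdeg V \<mu> u)"
    by (rule sum.swap_restrict[OF finite_V finite_V])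
  also have "\<dots> = (\<Sum>u\<in>V. (fdeg V \<mu> u)\<^sup>2)"
    unfolding power2_eq_square fdeg_def[of V \<mu> u for u] sum_distrib_right
    by (intro sum.cong refl) (auto simp: sym)
  finally show ?thesis .
qed

definition degree_defect :: real where
  "degree_defect =
     (\<Sum>v\<in>V. \<Sum>u\<in>V - {v}. \<mu> v u * (2 * fsize V \<mu> - fdeg V \<mu> v - fdeg V \<mu> u))"

lemma degree_defect_summand_nonneg:
  "v \<in> V \<Longrightarrow> u \<in> V - {v} \<Longrightarrow> 0 \<le> \<mu> v u * (2 * fsize V \<mu> - fdeg V \<mu> v - fdeg V \<mu> u)"
  using nonneg fdeg_add_fdeg_le[of v u] by (intro mult_nonneg_nonneg) auto

lemma fsize_square_decomposition:
  "4 * (fsize V \<mu>)\<^sup>2 = 2 * (\<Sum>v\<in>V. (fdeg V \<mu> v)\<^sup>2) + degree_defect"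
proof -
  let ?D = "2 * fsize V \<mu>" and ?d = "fdeg V \<mu>"
  have "degree_defect = (\<Sum>v\<in>V. \<Sum>u\<in>V - {v}. \<mu> v u * ?D)
      - (\<Sum>v\<in>V. \<Sum>u\<in>V - {v}. \<mu> v u * ?d v) - (\<Sum>v\<in>V. \<Sum>u\<in>V - {v}. \<mu> v u * ?d u)"
    unfolding degree_defect_def by (simp add: algebra_simps sum_subtractf sum.distrib)
  also have "(\<Sum>v\<in>V. \<Sum>u\<in>V - {v}. \<mu> v u * ?D) = ?D * ?D"
    using sum_fdeg_eq_2_fsize by (simp add: fdeg_def sum_distrib_right[symmetric])
  also have "(\<Sum>v\<in>V. \<Sum>u\<in>V - {v}. \<mu> v u * ?d v) = (\<Sum>v\<in>V. (?d v)\<^sup>2)"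
    by (simp add: fdeg_def sum_distrib_right power2_eq_square)
  finally show ?thesis
    unfolding sum_weighted_fdeg_neighbours by (simp add: power2_eq_square)
qed

lemma degree_defect_nonneg: "0 \<le> degree_defect"
  unfolding degree_defect_def using degree_defect_summand_nonneg
  by (intro sum_nonneg) auto

lemma degree_defect_eq_0_iff:
  "degree_defect = 0 \<longleftrightarrow>
     (\<forall>v\<in>V. \<forall>u\<in>V - {v}. \<mu> v u \<noteq> 0 \<longrightarrow> fdeg V \<mu> v + fdeg V \<mu> u = 2 * fsize V \<mu>)"
proof -
  let ?t = "\<lambda>v u. \<mu> v u * (2 * fsize V \<mu> - fdeg V \<mu> v - fdeg V \<mu> u)"
  have inner: "(\<Sum>u\<in>V - {v}. ?t v u) = 0 \<longleftrightarrow> (\<forall>u\<in>V - {v}. ?t v u = 0)" if "v \<in> V" for v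
    using finite_V degree_defect_summand_nonneg that by (intro sum_nonneg_eq_0_iff) auto
  have "degree_defect = 0 \<longleftrightarrow> (\<forall>v\<in>V. (\<Sum>u\<in>V - {v}. ?t v u) = 0)"
    unfolding degree_defect_def using finite_V degree_defect_summand_nonneg
    by (intro sum_nonneg_eq_0_iff) (auto intro: sum_nonneg)
  moreover have "?t v u = 0 \<longleftrightarrow> \<mu> v u \<noteq> 0 \<longrightarrow> fdeg V \<mu> v + fdeg V \<mu> u = 2 * fsize V \<mu>" for v u
    by auto
  ultimately show ?thesis using inner by simp
qed

definition single_edge :: bool where
  "single_edge \<longleftrightarrow> (\<exists>u\<in>V. \<exists>v\<in>V. u \<noteq> v \<and> \<mu> u v = fsize V \<mu> \<and>
      (\<forall>x\<in>V. \<forall>y\<in>V. x \<noteq> y \<and> {x, y} \<noteq> {u, v} \<longrightarrow> \<mu> x y = 0))"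

text \<open>The edgeless graph (on at least two vertices) counts as a single edge of weight \<open>0\<close>.\<close>

lemma single_edge_if_edgeless:
  assumes "card V \<ge> 2" and "\<forall>x\<in>V. \<forall>y\<in>V. x \<noteq> y \<longrightarrow> \<mu> x y = 0"
  shows single_edge
proof -
  obtain a b where "a \<in> V" "b \<in> V" "a \<noteq> b"
    using assms(1) card_le_Suc0_iff_eq[OF finite_V] by (metis not_less_eq_eq numeral_2_eq_2)
  moreover have "fsize V \<mu> = 0"
  proof -
    have "\<forall>v\<in>V. fdeg V \<mu> v = 0" using assms(2) fdeg_eq_0_iff by auto
    then show ?thesis using sum_fdeg_eq_2_fsize by simp
  qed
  ultimately show ?thesis unfolding single_edge_def using assms(2) by metis
qed

lemma single_edge_if_saturated_edge:
  assumes ab: "a \<in> V" "b \<in> V" "a \<noteq> b" "\<mu> a b \<noteq> 0"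
    and saturated: "fdeg V \<mu> a + fdeg V \<mu> b = 2 * fsize V \<mu>"
  shows single_edge
proof -
  have isolated: "fdeg V \<mu> x = 0" if "x \<in> V - {a, b}" for x
  proof -
    have "(\<Sum>y\<in>{a, b, x}. fdeg V \<mu> y) \<le> (\<Sum>y\<in>V. fdeg V \<mu> y)"
      using that ab finite_V fdeg_nonneg by (intro sum_mono2) auto
    moreover have "(\<Sum>y\<in>{a, b, x}. fdeg V \<mu> y) = fdeg V \<mu> a + fdeg V \<mu> b + fdeg V \<mu> x"
      using that ab by auto
    ultimately show ?thesis
      using that saturated fdeg_nonneg[of x] by (simp add: sum_fdeg_eq_2_fsize)
  qed
  have others_zero: "\<mu> x y = 0" if "x \<in> V" "y \<in> V" "x \<noteq> y" "{x, y} \<noteq> {a, b}" for x y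
  proof (cases "x \<in> {a, b}")
    case True
    with that have "y \<in> V - {a, b}" by (auto simp: doubleton_eq_iff)
    then have "\<forall>u\<in>V - {y}. \<mu> y u = 0" using isolated fdeg_eq_0_iff by blast
    then show ?thesis using that sym[of x y] by auto
  next
    case False
    with that have "x \<in> V - {a, b}" by blast
    then have "\<forall>u\<in>V - {x}. \<mu> x u = 0" using isolated fdeg_eq_0_iff by blast
    then show ?thesis using that by auto
  qed
  have "fdeg V \<mu> a = \<mu> a b" "fdeg V \<mu> b = \<mu> a b"
    using fdeg_eq_single_neighbour[of a b] fdeg_eq_single_neighbour[of b a]
      others_zero ab sym[of a b] by (auto simp: doubleton_eq_iff)
  then have "\<mu> a b = fsize V \<mu>" using saturated by simp
  then show ?thesis unfolding single_edge_def using ab others_zero by blast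
qed

lemma single_edge_imp_saturated:
  assumes single_edge and "v \<in> V" "u \<in> V - {v}" "\<mu> v u \<noteq> 0"
  shows "fdeg V \<mu> v + fdeg V \<mu> u = 2 * fsize V \<mu>"
proof -
  obtain a b where ab: "a \<in> V" "b \<in> V" "a \<noteq> b"
    and zero: "\<forall>x\<in>V. \<forall>y\<in>V. x \<noteq> y \<and> {x, y} \<noteq> {a, b} \<longrightarrow> \<mu> x y = 0"
    using assms(1) unfolding single_edge_def by blast
  have "fdeg V \<mu> x = 0" if "x \<in> V - {a, b}" for x
    using that zero fdeg_eq_0_iff by (auto simp: doubleton_eq_iff)
  then have "(\<Sum>x\<in>V - {a} - {b}. fdeg V \<mu> x) = 0" by (intro sum.neutral) auto
  then have "2 * fsize V \<mu> = fdeg V \<mu> a + fdeg V \<mu> b"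
    using ab finite_V sum_fdeg_eq_2_fsize
    by (simp add: sum.remove[of V a] sum.remove[of "V - {a}" b])
  moreover have "{v, u} = {a, b}" using zero[rule_format, of v u] assms by blast
  ultimately show ?thesis by (auto simp: doubleton_eq_iff)
qed

lemma degree_defect_eq_0_iff_single_edge:
  assumes "card V \<ge> 2"
  shows "degree_defect = 0 \<longleftrightarrow> single_edge"
proof
  assume "degree_defect = 0"
  then have saturated: "\<forall>v\<in>V. \<forall>u\<in>V - {v}. \<mu> v u \<noteq> 0 \<longrightarrow>
      fdeg V \<mu> v + fdeg V \<mu> u = 2 * fsize V \<mu>"
    by (simp only: degree_defect_eq_0_iff)
  show single_edge
  proof (cases "\<forall>x\<in>V. \<forall>y\<in>V. x \<noteq> y \<longrightarrow> \<mu> x y = 0")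
    case True
    then show ?thesis by (rule single_edge_if_edgeless[OF assms])
  next
    case False
    then obtain a b where ab: "a \<in> V" "b \<in> V" "a \<noteq> b" "\<mu> a b \<noteq> 0" by blast
    with saturated have "fdeg V \<mu> a + fdeg V \<mu> b = 2 * fsize V \<mu>" by blast
    then show ?thesis by (rule single_edge_if_saturated_edge[OF ab])
  qed
next
  assume single_edge
  then show "degree_defect = 0"
    unfolding degree_defect_eq_0_iff using single_edge_imp_saturated[OF \<open>single_edge\<close>] by blast
qed

lemma fsigma_bound_gap:
  assumes "card V = n" "n > 0"
  shows "2 * (fsize V \<mu>)\<^sup>2 / real n * (1 - 2 / real n) - fsigma V \<mu> =
         degree_defect / (2 * real n)"
proof -
  have "fsigma V \<mu> = ((\<Sum>v\<in>V. (fdeg V \<mu> v)\<^sup>2) - 4 * (fsize V \<mu>)\<^sup>2 / n) / n"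
    using sum_square_deviation_mean[of "fdeg V \<mu>" V] assms
    by (simp add: fsigma_def flambda_def sum_fdeg_eq_2_fsize power_mult_distrib)
  then show ?thesis using fsize_square_decomposition assms by (simp add: field_simps)
qed

end

theorem theorem3p2:
  fixes V :: "'a set" and \<nu> :: "'a \<Rightarrow> real" and \<mu> :: "'a \<Rightarrow> 'a \<Rightarrow> real" and n :: nat
  assumes "fuzzy_graph V \<nu> \<mu>" and "card V = n" and "n \<ge> 2"
  shows "fsigma V \<mu> \<le> 2 * (fsize V \<mu>)^2 / real n * (1 - 2 / real n) \<and>
         (fsigma V \<mu> = 2 * (fsize V \<mu>)^2 / real n * (1 - 2 / real n) \<longleftrightarrow>
         (\<exists>u\<in>V. \<exists>v\<in>V. u \<noteq> v \<and> \<mu> u v = fsize V \<mu> \<and>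
            (\<forall>x\<in>V. \<forall>y\<in>V. x \<noteq> y \<and> {x, y} \<noteq> {u, v} \<longrightarrow> \<mu> x y = 0)))"
proof -
  interpret symmetric_weights V \<mu>
    using assms(1) by (rule fuzzy_graph_imp_symmetric_weights)
  have gap: "2 * (fsize V \<mu>)\<^sup>2 / real n * (1 - 2 / real n) - fsigma V \<mu> =
      degree_defect / (2 * real n)"
    using assms by (intro fsigma_bound_gap) auto
  have "0 \<le> degree_defect / (2 * real n)"
    using degree_defect_nonneg by simp
  moreover have "degree_defect / (2 * real n) = 0 \<longleftrightarrow> single_edge"
    using assms degree_defect_eq_0_iff_single_edge by simp
  ultimately show ?thesis
    unfolding single_edge_def using gap by auto
qed

end
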